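(* Let $m$ be an even integer $\ge4$ and $l\ge m/2$. For any $u_1,\ldots,u_m\in V$, $$(\pi\otimes1_V^{\otimes m-4}\otimes\pi)(1_V^{\otimes m}\otimes C^{\otimes l})|u_1u_2\cdots u_m\omega_0^l| = (\pi\otimes1_V^{\otimes m-4}\otimes\pi)\Big((2g)^lu_1\cdots u_m+\big(l-\tfrac m2\big)(-1)^l\Phi_1(u)+(-1)^l\Phi_2(u)\Big),$$ where $\Phi_1(u)=(-1)^{\frac m2-1}\mathrm{Cont}(u_2\cdots u_{m-1})\,u_m\omega_0^{\frac m2-1}u_1$ and $$\Phi_2(u)=\sum_{\substack{1\le k\le m-1\\ k\text{ odd}}}(-1)^{\frac{k-1}2}\Big(\mathrm{Cont}(u_{m-k+1}\cdots u_{m-1})\,u_m\omega_0^{\frac{k-1}2}u_1u_2\cdots u_{m-k}+\mathrm{Cont}(u_2\cdots u_k)\,u_{k+1}\cdots u_m\omega_0^{\frac{k-1}2}u_1\Big).$$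
   Context: $\mathbb{K}$ is a field of characteristic zero and $V$ a symplectic $\mathbb{K}$-vector space of dimension $2g$ with symplectic basis $a_1,\ldots,a_g,b_1,\ldots,b_g$; $\omega_0=\sum_i(a_i\otimes b_i-b_i\otimes a_i)\in V^{\otimes 2}$. $C\colon V^{\otimes2}\to\mathbb{K}$ is bilinear with $C(a_i\otimes b_j)=\delta_{ij}$, $C(b_i\otimes a_j)=-\delta_{ij}$, $C(a_i\otimes a_j)=C(b_i\otimes b_j)=0$ (so $C(\omega_0)=2g$); $Q=\ker C$ and $\pi\colon V^{\otimes2}\to Q$ is the projection along $V^{\otimes2}=Q\oplus\mathbb{K}\omega_0$. Products are taken in the tensor algebra $T(V)$. Here $|\cdot|$ is the cyclic symmetrization $|x_1\cdots x_N|=\sum_{k=0}^{N-1}\nu^k(x_1\cdots x_N)$ for $x_i\in V$, with $\nu(x_1x_2\cdots x_N)=x_2\cdots x_Nx_1$. $C^{\otimes l}$ is applied to the last $2l$ tensor factors in consecutive pairs. For $v_1,\ldots,v_{2r}\in V$, $\mathrm{Cont}(v_1\cdots v_{2r})=C(v_1\otimes v_2)\cdots C(v_{2r-1}\otimes v_{2r})$ (equal to $1$ for $r=0$). *)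

theory Defs
  imports Main
begin

(* Coordinate model of V: basis e_0,...,e_{2g-1} with e_i = a_{i+1} (i < g),
   e_{g+i} = b_{i+1} (i < g).  A vector is its coordinate function (only
   coordinates < 2g are used); a degree-N tensor is its coefficient function on
   words of length N over {..<2g}. *)

type_synonym 'k vec = "nat \<Rightarrow> 'k"
type_synonym 'k tensor = "nat list \<Rightarrow> 'k"

definition words :: "nat \<Rightarrow> nat \<Rightarrow> nat list set" where
  "words g N = {w. length w = N \<and> set w \<subseteq> {..<2*g}}"

(* omc g i j = C(e_i \<otimes> e_j) = coefficient of e_i e_j in omega_0 *)
definition omc :: "nat \<Rightarrow> nat \<Rightarrow> nat \<Rightarrow> 'k::ring_1" where
  "omc g i j = (if i < g \<and> j = i + g then 1 else if j < g \<and> i = j + g then -1 else 0)"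

definition Cbil :: "nat \<Rightarrow> 'k::ring_1 vec \<Rightarrow> 'k vec \<Rightarrow> 'k" where
  "Cbil g x y = (\<Sum>i<2*g. \<Sum>j<2*g. x i * y j * omc g i j)"

fun contl :: "nat \<Rightarrow> 'k::ring_1 vec list \<Rightarrow> 'k" where
  "contl g (x # y # r) = Cbil g x y * contl g r"
| "contl g _ = 1"

definition vt :: "'k vec \<Rightarrow> 'k tensor" where
  "vt u w = u (hd w)"

definition vw :: "'k::comm_monoid_mult vec list \<Rightarrow> 'k tensor" where
  "vw us w = (\<Prod>i<length us. (us ! i) (w ! i))"

definition ompow :: "nat \<Rightarrow> nat \<Rightarrow> 'k::comm_ring_1 tensor" where
  "ompow g k w = (\<Prod>i<k. omc g (w ! (2*i)) (w ! (2*i+1)))"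

definition tm :: "nat \<Rightarrow> 'k::times tensor \<Rightarrow> 'k tensor \<Rightarrow> 'k tensor" where
  "tm n S T w = S (take n w) * T (drop n w)"

(* nu(x_1 x_2 ... x_N) = x_2 ... x_N x_1, extended linearly *)
definition nu :: "'k tensor \<Rightarrow> 'k tensor" where
  "nu T v = T (last v # butlast v)"

definition cyc :: "nat \<Rightarrow> 'k::comm_monoid_add tensor \<Rightarrow> 'k tensor" where
  "cyc N T v = (\<Sum>k<N. (nu ^^ k) T v)"

(* 1^{\<otimes> deg v} \<otimes> C^{\<otimes> l} applied to a tensor of degree deg v + 2l *)
definition contrC :: "nat \<Rightarrow> nat \<Rightarrow> 'k::comm_ring_1 tensor \<Rightarrow> 'k tensor" where
  "contrC g l T v = (\<Sum>z\<in>words g (2*l). T (v @ z) * (\<Prod>i<l. omc g (z ! (2*i)) (z ! (2*i+1))))"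

(* pi(x) = x - C(x)/(2g) omega_0, applied to the first two / last two factors *)
definition piL :: "nat \<Rightarrow> 'k::field tensor \<Rightarrow> 'k tensor" where
  "piL g T v = T v - omc g (v ! 0) (v ! 1) / of_nat (2*g) *
      (\<Sum>x<2*g. \<Sum>y<2*g. omc g x y * T (x # y # drop 2 v))"

definition piR :: "nat \<Rightarrow> 'k::field tensor \<Rightarrow> 'k tensor" where
  "piR g T v = T v - omc g (v ! (length v - 2)) (v ! (length v - 1)) / of_nat (2*g) *
      (\<Sum>x<2*g. \<Sum>y<2*g. omc g x y * T (take (length v - 2) v @ [x, y]))"

definition Pi2 :: "nat \<Rightarrow> 'k::field tensor \<Rightarrow> 'k tensor" where
  "Pi2 g T = piL g (piR g T)"

definition Phi1 :: "nat \<Rightarrow> nat \<Rightarrow> (nat \<Rightarrow> 'k::comm_ring_1 vec) \<Rightarrow> 'k tensor" where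
  "Phi1 g m u v = (-1) ^ (m div 2 - 1) * contl g (map u [2..<m]) *
     tm 1 (vt (u m)) (tm (2 * (m div 2 - 1)) (ompow g (m div 2 - 1)) (vt (u 1))) v"

definition Phi2 :: "nat \<Rightarrow> nat \<Rightarrow> (nat \<Rightarrow> 'k::comm_ring_1 vec) \<Rightarrow> 'k tensor" where
  "Phi2 g m u v = (\<Sum>k\<in>{k. 1 \<le> k \<and> k \<le> m - 1 \<and> odd k}. (-1) ^ ((k - 1) div 2) *
     (contl g (map u [m-k+1..<m]) *
        tm 1 (vt (u m)) (tm (k - 1) (ompow g ((k - 1) div 2)) (vw (map u [1..<m-k+1]))) v
      + contl g (map u [2..<k+1]) *
        tm (m - k) (vw (map u [k+1..<m+1])) (tm (k - 1) (ompow g ((k - 1) div 2)) (vt (u 1))) v))"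

end

(*
  Expanding the cyclic symmetrisation, the left-hand side is a sum over the m + 2l rotations
  of u_1 ... u_m omega_0^l, each contracted against omega_0^l.  The trivial rotation gives
  (2g)^l u_1 ... u_m.  A rotation by an even j > 0 puts the first or the last two output
  letters on a single factor omega_0, which pi annihilates.  For odd j the copy of omega_0^l
  inside the rotated word is shifted by one letter against the contracting copy; since the
  matrix of C squares to -1, this chain collapses to a single C, which carries u_m (if j < m),
  u_1 (if j > 2l), or both (if m < j <= 2l) to the other end of the word, while the u's
  paired with the contracting copy produce Cont.  These give the summands of Phi_2 and the
  l - m/2 copies of Phi_1 respectively.
*)

theory Submission
  imports Defs
begin

lemma length_words: "v \<in> words g n \<Longrightarrow> length v = n"
  by (simp add: words_def)

lemma nth_words_less: "v \<in> words g n \<Longrightarrow> i < n \<Longrightarrow> v ! i < 2*g"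
  by (auto simp: words_def dest!: nth_mem)

lemma words_0 [simp]: "words g 0 = {[]}"
  by (auto simp: words_def)

lemma sum_words_Suc:
  "(\<Sum>z\<in>words g (Suc n). f z) = (\<Sum>a<2*g. \<Sum>z\<in>words g n. f (a # z))"
proof -
  have "words g (Suc n) = (\<lambda>(a, z). a # z) ` ({..<2*g} \<times> words g n)"
    by (auto simp: words_def length_Suc_conv image_iff)
  moreover have "inj_on (\<lambda>(a, z). a # z) ({..<2*g} \<times> words g n)"
    by (auto simp: inj_on_def)
  ultimately show ?thesis
    by (simp add: sum.reindex sum.cartesian_product split_def)
qed

lemma sum_words_append:
  "(\<Sum>z\<in>words g (a + b). f z) = (\<Sum>x\<in>words g a. \<Sum>y\<in>words g b. f (x @ y))"
  by (induction a arbitrary: f) (simp_all add: sum_words_Suc)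

lemma sum_words_split_pair:
  "(\<Sum>z\<in>words g (a + (2 + b)). f z) =
   (\<Sum>p\<in>words g a. \<Sum>c<2*g. \<Sum>d<2*g. \<Sum>x\<in>words g b. f (p @ c # d # x))"
  by (subst sum_words_append) (simp add: sum_words_Suc numeral_2_eq_2)

lemma vw_Nil [simp]: "vw [] w = 1"
  by (simp add: vw_def)

lemma vw_Cons [simp]: "vw (x # xs) (a # w) = x a * vw xs w"
  unfolding vw_def by (simp only: length_Cons prod.lessThan_Suc_shift) simp

lemma vw_append: "length a = length xs \<Longrightarrow> vw (xs @ ys) (a @ b) = vw xs a * vw ys b"
  by (induction xs arbitrary: a) (auto simp: length_Suc_conv mult.assoc)

lemma vt_Cons [simp]: "vt u (a # w) = u a"
  by (simp add: vt_def)

lemma ompow_0 [simp]: "ompow g 0 w = 1"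
  by (simp add: ompow_def)

lemma ompow_Suc [simp]: "ompow g (Suc n) (a # b # w) = omc g a b * ompow g n w"
  unfolding ompow_def by (simp only: prod.lessThan_Suc_shift) simp

lemma ompow_append:
  "length x = 2*k \<Longrightarrow> k \<le> n \<Longrightarrow> ompow g n (x @ y) = ompow g k x * ompow g (n - k) y"
proof (induction k arbitrary: x n)
  case (Suc k)
  then obtain a b x' where "x = a # b # x'" "length x' = 2*k"
    by (auto simp: numeral_2_eq_2 length_Suc_conv)
  moreover obtain n' where "n = Suc n'"
    using Suc.prems by (cases n) auto
  ultimately show ?case
    using Suc by (simp add: mult.assoc)
qed simp

lemma ompow_append_pair:
  "length x = 2*k \<Longrightarrow> k < n \<Longrightarrow>
   ompow g n (x @ a # b # y) = ompow g k x * omc g a b * ompow g (n - k - 1) y"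
  using ompow_append[of x k n g "a # b # y"] by (cases "n - k") (auto simp: mult.assoc)

lemma omc_antisym: "omc g a b = - (omc g b a :: 'k::ring_1)"
  by (auto simp: omc_def)

lemma sum_omc_omc:
  assumes "a < 2*g" "b < 2*g"
  shows "(\<Sum>c<2*g. omc g a c * omc g c b) = (if a = b then -1 else (0::'k::ring_1))"
proof -
  define a' where "a' = (if a < g then a + g else a - g)"
  have "a' < 2*g" using assms by (auto simp: a'_def)
  have "(\<Sum>c<2*g. omc g a c * omc g c b) = (\<Sum>c<2*g. if c = a' then omc g a a' * omc g a' b else 0 :: 'k)"
    by (rule sum.cong) (auto simp: omc_def a'_def)
  then show ?thesis
    using assms \<open>a' < 2*g\<close> by (simp add: omc_def a'_def)
qed

lemma sum_omc_squared: "(\<Sum>a<2*g. \<Sum>b<2*g. omc g a b * omc g a b) = (of_nat (2*g) :: 'k::ring_1)"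
proof -
  have "(\<Sum>b<2*g. omc g a b * omc g a b) = (1::'k)" if "a < 2*g" for a
  proof -
    have "(\<Sum>b<2*g. omc g a b * omc g a b) = - (\<Sum>b<2*g. omc g a b * omc g b a :: 'k)"
      by (subst (2) omc_antisym) (simp add: sum_negf)
    then show ?thesis using that by (simp add: sum_omc_omc)
  qed
  then have "(\<Sum>a<2*g. \<Sum>b<2*g. omc g a b * omc g a b) = (\<Sum>a<2*g. 1::'k)"
    by (intro sum.cong) simp_all
  then show ?thesis by simp
qed

lemma sum_ompow_squared:
  "(\<Sum>z\<in>words g (2*l). ompow g l z * ompow g l z) = (of_nat (2*g) ^ l :: 'k::comm_ring_1)"
proof (induction l)
  case (Suc l)
  have "(\<Sum>z\<in>words g (2 * Suc l). ompow g (Suc l) z * ompow g (Suc l) z) =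
     (\<Sum>a<2*g. \<Sum>b<2*g. omc g a b * omc g a b *
        (\<Sum>z\<in>words g (2*l). ompow g l z * ompow g l z) :: 'k)"
    by (simp add: sum_words_Suc sum_distrib_left mult_ac)
  also have "\<dots> = of_nat (2*g) ^ Suc l"
    using Suc.IH sum_omc_squared[where 'k='k, of g] by (simp add: sum_distrib_right[symmetric])
  finally show ?case .
qed simp

lemma sum_vw_ompow:
  "length us = 2*n \<Longrightarrow> (\<Sum>p\<in>words g (2*n). vw us p * ompow g n p) = (contl g us :: 'k::comm_ring_1)"
proof (induction n arbitrary: us)
  case (Suc n)
  then obtain x y us' where us: "us = x # y # us'" "length us' = 2*n"
    by (auto simp: numeral_2_eq_2 length_Suc_conv)
  have "(\<Sum>p\<in>words g (2 * Suc n). vw us p * ompow g (Suc n) p)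
     = (\<Sum>a<2*g. \<Sum>b<2*g. x a * y b * omc g a b * (\<Sum>p\<in>words g (2*n). vw us' p * ompow g n p))"
    by (simp add: us sum_words_Suc sum_distrib_left mult_ac)
  also have "\<dots> = Cbil g x y * contl g us'"
    using Suc.IH[OF us(2)] by (simp add: Cbil_def sum_distrib_right)
  finally show ?case by (simp add: us)
qed simp

lemma sum_ompow_shift:
  assumes "d < 2*g" "e < 2*g"
  shows "(\<Sum>x\<in>words g (2*n). ompow g (Suc n) (d # x @ [e]) * ompow g n x) = (-1)^n * (omc g d e :: 'k::comm_ring_1)"
  using assms(1)
proof (induction n arbitrary: d)
  case (Suc n)
  let ?S = "\<lambda>b. (\<Sum>x\<in>words g (2*n). ompow g (Suc n) (b # x @ [e]) * ompow g n x :: 'k)"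
  have "(\<Sum>x\<in>words g (2 * Suc n). ompow g (Suc (Suc n)) (d # x @ [e]) * ompow g (Suc n) x)
      = (\<Sum>a<2*g. \<Sum>b<2*g. (omc g d a * omc g a b) * ?S b)"
    by (simp add: sum_words_Suc sum_distrib_left mult_ac)
  also have "\<dots> = (\<Sum>b<2*g. (\<Sum>a<2*g. omc g d a * omc g a b) * ?S b)"
    by (subst sum.swap) (simp add: sum_distrib_right)
  also have "\<dots> = (\<Sum>b<2*g. if d = b then - ?S b else 0)"
    using Suc.prems by (intro sum.cong refl) (simp add: sum_omc_omc)
  also have "\<dots> = - ?S d"
    using Suc.prems by (simp add: sum.delta)
  also have "\<dots> = (-1)^Suc n * omc g d e"
    using Suc by simp
  finally show ?case .
qed simp

lemma sum_vec_shift_chain: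
  assumes "e < 2*g"
  shows "(\<Sum>c<2*g. \<Sum>d<2*g. \<Sum>x\<in>words g (2*n).
            u c * omc g c d * (ompow g (Suc n) (d # x @ [e]) * ompow g n x))
       = (-1)^Suc n * (u e :: 'k::comm_ring_1)"
proof -
  have "(\<Sum>c<2*g. \<Sum>d<2*g. \<Sum>x\<in>words g (2*n).
            u c * omc g c d * (ompow g (Suc n) (d # x @ [e]) * ompow g n x))
     = (\<Sum>c<2*g. \<Sum>d<2*g. u c * omc g c d * ((-1)^n * omc g d e))"
    using assms by (simp add: sum_distrib_left[symmetric] sum_ompow_shift)
  also have "\<dots> = (\<Sum>c<2*g. u c * (-1)^n * (\<Sum>d<2*g. omc g c d * omc g d e))"
    by (simp add: sum_distrib_left mult_ac)
  also have "\<dots> = (\<Sum>c<2*g. if c = e then - (u c * (-1)^n) else 0)"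
    using assms by (intro sum.cong refl) (simp add: sum_omc_omc)
  also have "\<dots> = (-1)^Suc n * u e"
    using assms by (simp add: sum.delta)
  finally show ?thesis .
qed

lemma sum_shift_chain_vec:
  assumes "e < 2*g"
  shows "(\<Sum>q\<in>words g (2*n). \<Sum>c<2*g. \<Sum>a<2*g.
            ompow g (Suc n) (e # q @ [c]) * ompow g n q * omc g c a * u a)
       = (-1)^Suc n * (u e :: 'k::comm_ring_1)"
proof -
  have "(\<Sum>q\<in>words g (2*n). \<Sum>c<2*g. \<Sum>a<2*g.
            ompow g (Suc n) (e # q @ [c]) * ompow g n q * omc g c a * u a)
     = (\<Sum>c<2*g. \<Sum>a<2*g. (\<Sum>q\<in>words g (2*n). ompow g (Suc n) (e # q @ [c]) * ompow g n q) * omc g c a * u a)"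
    by (subst sum.swap) (simp add: sum.swap[where A="words g (2*n)"] sum_distrib_right)
  also have "\<dots> = (\<Sum>c<2*g. \<Sum>a<2*g. (-1)^n * omc g e c * omc g c a * u a)"
    using assms by (simp add: sum_ompow_shift)
  also have "\<dots> = (\<Sum>a<2*g. (-1)^n * (\<Sum>c<2*g. omc g e c * omc g c a) * u a)"
    by (subst sum.swap) (simp add: sum_distrib_left sum_distrib_right mult_ac)
  also have "\<dots> = (\<Sum>a<2*g. if e = a then - ((-1)^n * u a) else 0)"
    using assms by (intro sum.cong refl) (simp add: sum_omc_omc)
  also have "\<dots> = (-1)^Suc n * u e"
    using assms by (simp add: sum.delta)
  finally show ?thesis .
qed

lemma piL_Cons2:
  "piL g f (x # y # r) = f (x # y # r) - omc g x y / of_nat (2*g) * (\<Sum>a<2*g. \<Sum>b<2*g. omc g a b * f (a # b # r))"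
  by (simp add: piL_def)

lemma piR_snoc2:
  "piR g f (r @ [x, y]) = f (r @ [x, y]) - omc g x y / of_nat (2*g) * (\<Sum>a<2*g. \<Sum>b<2*g. omc g a b * f (r @ [a, b]))"
  by (simp add: piR_def nth_append)

lemma piR_Cons2: "2 \<le> length r \<Longrightarrow> piR g f (x # y # r) = piR g (\<lambda>r'. f (x # y # r')) r"
proof -
  assume "2 \<le> length r"
  then obtain a b r' where "r = a # b # r'"
    by (cases r rule: remdups_adj.cases) auto
  then show ?thesis
    by (simp add: piR_def)
qed

lemma piR_mult: "piR g (\<lambda>v. c * f v) w = c * piR g f w"
  by (simp add: piR_def right_diff_distrib sum_distrib_left mult_ac)

lemma piL_cong_length:
  "(\<And>v. length v = length w \<Longrightarrow> f v = f' v) \<Longrightarrow> 2 \<le> length w \<Longrightarrow> piL g f w = piL g f' w"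
  by (simp add: piL_def)

lemma piR_cong_length:
  "(\<And>v. length v = length w \<Longrightarrow> f v = f' v) \<Longrightarrow> 2 \<le> length w \<Longrightarrow> piR g f w = piR g f' w"
  by (simp add: piR_def)

lemma piL_eq_0_if_pair:
  assumes "0 < g" and "\<And>a b. f (a # b # r) = omc g a b * (c :: 'k::field_char_0)"
  shows "piL g f (x # y # r) = 0"
proof -
  have "(\<Sum>a<2*g. \<Sum>b<2*g. omc g a b * f (a # b # r)) = c * (\<Sum>a<2*g. \<Sum>b<2*g. omc g a b * omc g a b)"
    by (simp add: assms(2) sum_distrib_left mult_ac)
  then show ?thesis
    using assms by (simp add: piL_Cons2 sum_omc_squared)
qed

lemma piR_eq_0_if_pair:
  assumes "0 < g" and "\<And>a b. f (r @ [a, b]) = (c :: 'k::field_char_0) * omc g a b"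
  shows "piR g f (r @ [x, y]) = 0"
proof -
  have "(\<Sum>a<2*g. \<Sum>b<2*g. omc g a b * f (r @ [a, b])) = c * (\<Sum>a<2*g. \<Sum>b<2*g. omc g a b * omc g a b)"
    by (simp add: assms(2) sum_distrib_left mult_ac)
  then show ?thesis
    using assms by (simp add: piR_snoc2 sum_omc_squared)
qed

lemma Pi2_eq_0_if_right_pair:
  assumes "0 < g" "2 \<le> length w"
    and "\<And>r x y. length r = length w - 2 \<Longrightarrow> f (r @ [x, y]) = F r * omc g x y"
  shows "Pi2 g f w = (0 :: 'k::field_char_0)"
proof -
  have "piR g f v = 0" if "length v = length w" for v
  proof -
    have "length (drop (length w - 2) v) = 2"
      using assms(2) that by simp
    then obtain x y where "drop (length w - 2) v = [x, y]"
      by (cases "drop (length w - 2) v" rule: remdups_adj.cases) auto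
    then have "v = take (length w - 2) v @ [x, y]"
      by (metis append_take_drop_id)
    moreover have "length (take (length w - 2) v) = length w - 2"
      using that by simp
    ultimately show ?thesis
      using assms(1,3) by (metis piR_eq_0_if_pair)
  qed
  then have "Pi2 g f w = piL g (\<lambda>_. 0) w"
    unfolding Pi2_def using assms(2) by (rule piL_cong_length)
  then show ?thesis
    by (simp add: piL_def)
qed

lemma Pi2_eq_0_if_left_pair:
  assumes "0 < g" "4 \<le> length w"
    and "\<And>r x y. length r = length w - 2 \<Longrightarrow> f (x # y # r) = omc g x y * F r"
  shows "Pi2 g f w = (0 :: 'k::field_char_0)"
proof -
  obtain x y r where w: "w = x # y # r"
    using assms(2) by (cases w rule: remdups_adj.cases) auto
  have "piR g f (a # b # r) = omc g a b * piR g F r" for a b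
  proof -
    have "piR g f (a # b # r) = piR g (\<lambda>r'. f (a # b # r')) r"
      using assms(2) w by (simp add: piR_Cons2)
    also have "\<dots> = piR g (\<lambda>r'. omc g a b * F r') r"
      using assms(2,3) w by (intro piR_cong_length) simp_all
    finally show ?thesis by (simp add: piR_mult)
  qed
  then show ?thesis
    unfolding Pi2_def w using piL_eq_0_if_pair[OF assms(1)] by blast
qed

lemma Pi2_sum: "finite J \<Longrightarrow> Pi2 g (\<lambda>v. \<Sum>j\<in>J. F j v) w = (\<Sum>j\<in>J. Pi2 g (F j) w)"
proof -
  assume "finite J"
  then have "piR g (\<lambda>v. \<Sum>j\<in>J. F j v) = (\<lambda>v. \<Sum>j\<in>J. piR g (F j) v)"
    by (simp add: fun_eq_iff piR_def sum_subtractf sum_distrib_left sum.swap[where A=J])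
  with \<open>finite J\<close> show ?thesis
    by (simp add: Pi2_def piL_def sum_subtractf sum_distrib_left sum.swap[where A=J])
qed

lemma Pi2_zero: "Pi2 g (\<lambda>v. 0) w = 0"
  by (simp add: Pi2_def piL_def piR_def)

lemma Pi2_cong_words:
  assumes "\<And>v. v \<in> words g m \<Longrightarrow> f v = f' v" and "w \<in> words g m" and "2 \<le> m"
  shows "Pi2 g f w = Pi2 g f' w"
proof -
  have closed: "x # y # drop 2 v \<in> words g m" "take (length v - 2) v @ [x, y] \<in> words g m"
    if "v \<in> words g m" "x < 2*g" "y < 2*g" for v x y
    using that \<open>2 \<le> m\<close> by (auto simp: words_def dest: in_set_takeD in_set_dropD)
  have "piR g f v = piR g f' v" if "v \<in> words g m" for v
    using that assms(1) closed(2)[OF that] by (simp add: piR_def)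
  then show ?thesis
    using assms(2) closed(1)[OF assms(2)] by (simp add: Pi2_def piL_def)
qed

lemma last_Cons_butlast_eq_rotate:
  assumes "xs \<noteq> []"
  shows "last xs # butlast xs = rotate (length xs - 1) xs"
proof -
  have "rotate (length (butlast xs)) (butlast xs @ [last xs]) = [last xs] @ butlast xs"
    by (rule rotate_append)
  then show ?thesis
    using assms by simp
qed

lemma funpow_nu:
  "xs \<noteq> [] \<Longrightarrow> k \<le> length xs \<Longrightarrow> (nu ^^ k) T xs = T (rotate (length xs - k) xs)"
proof (induction k arbitrary: T)
  case (Suc k)
  let ?n = "length xs"
  have "(nu ^^ Suc k) T xs = nu T (rotate (?n - k) xs)"
    using Suc by (simp add: funpow_Suc_right del: funpow.simps)
  also have "\<dots> = T (rotate (?n - 1) (rotate (?n - k) xs))"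
    using Suc.prems by (simp add: nu_def last_Cons_butlast_eq_rotate)
  also have "\<dots> = T (rotate (?n - Suc k) (rotate ?n xs))"
  proof -
    have "?n - 1 + (?n - k) = ?n - Suc k + ?n"
      using Suc.prems by simp
    then show ?thesis
      by (simp only: rotate_rotate)
  qed
  finally show ?case
    by simp
qed simp

lemma cyc_eq_sum_rotate:
  assumes "length xs = N" and "0 < N"
  shows "cyc N T xs = (\<Sum>j<N. T (rotate j xs))"
proof -
  have "xs \<noteq> []"
    using assms by auto
  then have "cyc N T xs = (\<Sum>k<N. T (rotate ((N - k) mod N) xs))"
    unfolding cyc_def using assms
    by (intro sum.cong refl) (auto simp: funpow_nu simp flip: rotate_conv_mod)
  also have "\<dots> = (\<Sum>j<N. T (rotate j xs))"
  proof -
    have inv: "(N - (N - k) mod N) mod N = k" if "k < N" for k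
      using that by (cases "k = 0") auto
    show ?thesis
      by (rule sum.reindex_bij_witness[where i="\<lambda>j. (N - j) mod N" and j="\<lambda>k. (N - k) mod N"])
        (use inv \<open>0 < N\<close> in auto)
  qed
  finally show ?thesis .
qed

lemma contrC_eq_sum_ompow: "contrC g l T v = (\<Sum>z\<in>words g (2*l). T (v @ z) * ompow g l z)"
  by (simp add: contrC_def ompow_def)

lemma contrC_cyc:
  assumes "length v + 2*l = N" and "0 < N"
  shows "contrC g l (cyc N T) v = (\<Sum>j<N. contrC g l (\<lambda>y. T (rotate j y)) v)"
proof -
  have "contrC g l (cyc N T) v = (\<Sum>z\<in>words g (2*l). \<Sum>j<N. T (rotate j (v @ z)) * ompow g l z)"
    unfolding contrC_eq_sum_ompow sum_distrib_right[symmetric] using assms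
    by (intro sum.cong refl) (simp add: cyc_eq_sum_rotate length_words)
  then show ?thesis
    by (simp add: contrC_eq_sum_ompow sum.swap[where A="words g (2*l)"])
qed

definition contr_rot :: "nat \<Rightarrow> nat \<Rightarrow> nat \<Rightarrow> 'k::comm_ring_1 tensor \<Rightarrow> nat \<Rightarrow> 'k tensor" where
  "contr_rot g m l U j = contrC g l (\<lambda>y. tm m U (ompow g l) (rotate j y))"

lemma contr_rot_0:
  assumes "length v = m"
  shows "contr_rot g m l U 0 v = of_nat (2*g) ^ l * U v"
proof -
  have "contr_rot g m l U 0 v = U v * (\<Sum>z\<in>words g (2*l). ompow g l z * ompow g l z)"
    using assms by (simp add: contr_rot_def contrC_eq_sum_ompow tm_def sum_distrib_left mult.assoc)
  also have "\<dots> = of_nat (2*g) ^ l * U v"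
    by (subst sum_ompow_squared) (rule mult.commute)
  finally show ?thesis .
qed

lemma tm_ompow_pair:
  assumes "length a = m + 2*k" and "k < l"
  shows "tm m U (ompow g l) (a @ x # y # b) =
    U (take m a) * ompow g k (drop m a) * omc g x y * ompow g (l - k - 1) b"
  using assms by (simp add: tm_def ompow_append_pair mult.assoc)

text \<open>For even \<open>j \<noteq> 0\<close> the rotation moves the first two letters of \<open>v\<close>, or
  for \<open>j \<ge> m\<close> the last two, onto a factor \<open>\<omega>\<^sub>0\<close> of \<open>\<omega>\<^sub>0\<^sup>l\<close>, which \<open>\<pi>\<close> annihilates.\<close>

lemma Pi2_contr_rot_even_left:
  assumes "0 < g" "length w = m" "4 \<le> m" "even j" "0 < j" "j \<le> 2*l"
  shows "Pi2 g (contr_rot g m l U j) w = (0 :: 'k::field_char_0)"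
proof -
  obtain q where "j = 2*q"
    using assms(4) by (auto elim: evenE)
  define i where "i = q - 1"
  have j: "j = Suc (Suc (2*i))"
    using assms(5) \<open>j = 2*q\<close> by (simp add: i_def)
  define k where "k = l - Suc i"
  have k: "k < l" "l - k - 1 = i"
    using assms(6) by (simp_all add: j k_def)
  define F where "F r = (\<Sum>z\<in>words g (2*l). U (take m (drop (2*i) (r @ z)))
    * ompow g k (drop m (drop (2*i) (r @ z))) * ompow g i (take (2*i) (r @ z)) * ompow g l z)" for r
  show ?thesis
  proof (rule Pi2_eq_0_if_left_pair[where F = F])
    fix r :: "nat list" and x y :: nat
    assume r: "length r = length w - 2"
    have "tm m U (ompow g l) (rotate j (x # y # r @ z)) =
      omc g x y * (U (take m (drop (2*i) (r @ z))) * ompow g k (drop m (drop (2*i) (r @ z)))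
                   * ompow g i (take (2*i) (r @ z)))"
      if "length z = 2*l" for z
    proof -
      have "j mod length (x # y # r @ z) = j"
        using assms r that by simp
      then have "rotate j (x # y # r @ z) = drop (2*i) (r @ z) @ x # y # take (2*i) (r @ z)"
        unfolding rotate_drop_take by (simp add: j)
      moreover have "length (drop (2*i) (r @ z)) = m + 2*k"
        using assms r that by (simp add: j k_def)
      ultimately show ?thesis
        using k by (simp only: tm_ompow_pair) (simp add: mult_ac)
    qed
    then show "contr_rot g m l U j (x # y # r) = omc g x y * F r"
      unfolding contr_rot_def contrC_eq_sum_ompow F_def sum_distrib_left
      by (intro sum.cong refl) (simp add: length_words mult.assoc)
  qed (use assms in auto)
qed

lemma Pi2_contr_rot_even_right:
  assumes "0 < g" "length w = m" "2 \<le> m" "even m" "even j" "m \<le> j" "j < m + 2*l"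
  shows "Pi2 g (contr_rot g m l U j) w = (0 :: 'k::field_char_0)"
proof -
  obtain p where p: "j = m + 2*p"
    using assms(4-6) by (metis dvd_diff_nat evenE le_add_diff_inverse)
  define k where "k = l - Suc p"
  have k: "k < l" "l - k - 1 = p"
    using assms(7) by (simp_all add: p k_def)
  define F where "F r = (\<Sum>z\<in>words g (2*l). U (take m (drop (2*p) z @ r))
    * ompow g k (drop m (drop (2*p) z @ r)) * ompow g p (take (2*p) z) * ompow g l z)" for r
  show ?thesis
  proof (rule Pi2_eq_0_if_right_pair[where F = F])
    fix r :: "nat list" and x y :: nat
    assume r: "length r = length w - 2"
    have "tm m U (ompow g l) (rotate j (r @ x # y # z)) =
      U (take m (drop (2*p) z @ r)) * ompow g k (drop m (drop (2*p) z @ r))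
        * ompow g p (take (2*p) z) * omc g x y"
      if "length z = 2*l" for z
    proof -
      have "j mod length (r @ x # y # z) = j"
        using assms r that by simp
      moreover have "j = length (r @ [x, y]) + 2*p"
        using assms r p by simp
      ultimately have "rotate j (r @ x # y # z) = (drop (2*p) z @ r) @ x # y # take (2*p) z"
        unfolding rotate_drop_take by simp
      moreover have "length (drop (2*p) z @ r) = m + 2*k"
        using assms r that by (simp add: p k_def)
      ultimately show ?thesis
        using k by (simp only: tm_ompow_pair) (simp add: mult_ac)
    qed
    then show "contr_rot g m l U j (r @ [x, y]) = F r * omc g x y"
      unfolding contr_rot_def contrC_eq_sum_ompow F_def sum_distrib_right
      by (intro sum.cong refl) (simp add: length_words mult_ac)
  qed (use assms in auto)
qed

definition Phi2_term1 :: "nat \<Rightarrow> nat \<Rightarrow> (nat \<Rightarrow> 'k::comm_ring_1 vec) \<Rightarrow> nat \<Rightarrow> 'k tensor" where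
  "Phi2_term1 g m u k v = contl g (map u [m-k+1..<m]) *
     tm 1 (vt (u m)) (tm (k - 1) (ompow g ((k - 1) div 2)) (vw (map u [1..<m-k+1]))) v"

definition Phi2_term2 :: "nat \<Rightarrow> nat \<Rightarrow> (nat \<Rightarrow> 'k::comm_ring_1 vec) \<Rightarrow> nat \<Rightarrow> 'k tensor" where
  "Phi2_term2 g m u k v = contl g (map u [2..<k+1]) *
     tm (m - k) (vw (map u [k+1..<m+1])) (tm (k - 1) (ompow g ((k - 1) div 2)) (vt (u 1))) v"

lemma neg_one_power_eq:
  assumes "a + b = 2*c"
  shows "(-1 :: 'k::comm_ring_1) ^ a = (-1) ^ b"
proof -
  have "even (a + b)"
    using assms by simp
  then show ?thesis
    by (auto simp: minus_one_power_iff)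
qed

lemma tm_rotate_odd_less:
  fixes u :: "nat \<Rightarrow> 'k::comm_ring_1 vec"
  assumes "m = 2*i + 1 + q" "l = i + 1 + n"
    and "length v1 = 2*i" "length v2 = q" "length p = 2*i" "length x = 2*n"
  shows "tm m (vw (map u [1..<m+1])) (ompow g l) (rotate (2*i + 1) ((v0 # v1 @ v2) @ p @ c # d # x))
      * ompow g l (p @ c # d # x)
    = vw (map u [1..<q+1]) v2 * ompow g i v1 * (vw (map u [q+1..<m]) p * ompow g i p)
      * (u m c * omc g c d * (ompow g (Suc n) (d # x @ [v0]) * ompow g n x))"
proof -
  have "map u [1..<m+1] = map u [1..<q+1] @ map u [q+1..<m] @ [u m]"
    using assms(1) upt_add_eq_append[of 1 "q+1" "2*i+1"] by (simp add: add.commute)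
  then have u: "vw (map u [1..<m+1]) (v2 @ p @ [c]) =
      vw (map u [1..<q+1]) v2 * vw (map u [q+1..<m]) p * u m c"
    using assms by (simp add: vw_append mult.assoc)
  have rot: "rotate (2*i + 1) ((v0 # v1 @ v2) @ p @ c # d # x) = (v2 @ p @ [c]) @ (d # x @ [v0]) @ v1"
    using assms by (simp add: rotate_drop_take)
  have split: "take m ((v2 @ p @ [c]) @ (d # x @ [v0]) @ v1) = v2 @ p @ [c]"
    "drop m ((v2 @ p @ [c]) @ (d # x @ [v0]) @ v1) = (d # x @ [v0]) @ v1"
    using assms by simp_all
  have omega: "ompow g l ((d # x @ [v0]) @ v1) = ompow g (Suc n) (d # x @ [v0]) * ompow g i v1"
    "ompow g l (p @ c # d # x) = ompow g i p * omc g c d * ompow g n x"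
    using assms by (subst ompow_append[where k="Suc n"], simp_all add: ompow_append_pair)
  show ?thesis
    unfolding rot tm_def split u omega by (simp only: mult_ac)
qed

lemma contr_rot_odd_less_Cons:
  fixes u :: "nat \<Rightarrow> 'k::comm_ring_1 vec"
  assumes mq: "m = 2*i + 1 + q" and ln: "l = i + 1 + n"
    and v: "length v1 = 2*i" "length v2 = q" "v0 < 2*g"
  shows "contr_rot g m l (vw (map u [1..<m+1])) (2*i + 1) (v0 # v1 @ v2)
    = (-1)^Suc n * (contl g (map u [q+1..<m]) * u m v0 * ompow g i v1 * vw (map u [1..<q+1]) v2)"
proof -
  have "contr_rot g m l (vw (map u [1..<m+1])) (2*i + 1) (v0 # v1 @ v2) =
    (\<Sum>p\<in>words g (2*i). \<Sum>c<2*g. \<Sum>d<2*g. \<Sum>x\<in>words g (2*n).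
      (vw (map u [1..<q+1]) v2 * ompow g i v1 * (vw (map u [q+1..<m]) p * ompow g i p))
      * (u m c * omc g c d * (ompow g (Suc n) (d # x @ [v0]) * ompow g n x)))"
  proof -
    have l2: "2*l = 2*i + (2 + 2*n)"
      using ln by simp
    show ?thesis
      unfolding contr_rot_def contrC_eq_sum_ompow l2 sum_words_split_pair
      by (intro sum.cong refl tm_rotate_odd_less[OF mq ln v(1,2)]) (simp_all add: length_words)
  qed
  also have "\<dots> = vw (map u [1..<q+1]) v2 * ompow g i v1
      * (\<Sum>p\<in>words g (2*i). vw (map u [q+1..<m]) p * ompow g i p)
      * (\<Sum>c<2*g. \<Sum>d<2*g. \<Sum>x\<in>words g (2*n). u m c * omc g c d * (ompow g (Suc n) (d # x @ [v0]) * ompow g n x))"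
    by (simp only: sum_distrib_left[symmetric] sum_distrib_right[symmetric])
  also have "\<dots> = vw (map u [1..<q+1]) v2 * ompow g i v1 * contl g (map u [q+1..<m]) * ((-1)^Suc n * u m v0)"
  proof -
    have "(\<Sum>p\<in>words g (2*i). vw (map u [q+1..<m]) p * ompow g i p) = contl g (map u [q+1..<m])"
      by (rule sum_vw_ompow) (simp add: mq)
    then show ?thesis
      unfolding sum_vec_shift_chain[OF \<open>v0 < 2*g\<close>] by (simp only:)
  qed
  also have "\<dots> = (-1)^Suc n * (contl g (map u [q+1..<m]) * u m v0 * ompow g i v1 * vw (map u [1..<q+1]) v2)"
    by (simp only: mult_ac)
  finally show ?thesis .
qed

lemma contr_rot_odd_less:
  fixes u :: "nat \<Rightarrow> 'k::comm_ring_1 vec"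
  assumes v: "v \<in> words g m" and j: "j = 2*i + 1" "j < m" and "m \<le> 2*l"
  shows "contr_rot g m l (vw (map u [1..<m+1])) j v = (-1)^l * (-1)^i * Phi2_term1 g m u j v"
proof -
  define q n where "q = m - j" and "n = l - i - 1"
  have mq: "m = 2*i + 1 + q" and ln: "l = i + 1 + n"
    using assms by (simp_all add: q_def n_def)
  obtain v0 v' where "v = v0 # v'"
    using length_words[OF v] j by (cases v) auto
  define v1 v2 where "v1 = take (2*i) v'" and "v2 = drop (2*i) v'"
  have vv: "v = v0 # v1 @ v2" "length v1 = 2*i" "length v2 = q"
    using \<open>v = v0 # v'\<close> length_words[OF v] mq by (simp_all add: v1_def v2_def)
  have "v0 < 2*g"
    using nth_words_less[OF v, of 0] vv j by simp
  have sign: "(-1::'k)^Suc n = (-1)^l * (-1)^i"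
    unfolding power_add[symmetric] by (rule neg_one_power_eq[of _ _ l]) (simp add: ln)
  have "Phi2_term1 g m u j v = contl g (map u [q+1..<m]) * u m v0 * ompow g i v1 * vw (map u [1..<q+1]) v2"
  proof -
    have "m - j + 1 = q + 1" "j - 1 = 2*i" "(j - 1) div 2 = i"
      using j by (simp_all add: q_def)
    then show ?thesis
      unfolding Phi2_term1_def tm_def vv(1) using vv(2) by (simp add: mult.assoc del: upt_Suc)
  qed
  then show ?thesis
    unfolding vv(1) j(1) contr_rot_odd_less_Cons[OF mq ln vv(2,3) \<open>v0 < 2*g\<close>] sign
    by (simp only: mult_ac)
qed

lemma tm_rotate_odd_mid:
  fixes u :: "nat \<Rightarrow> 'k::comm_ring_1 vec"
  assumes "m = 2*h + 2" "l = s + h + n + 2"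
    and "length v1 = 2*h" "length q = 2*s" "length p = 2*h" "length x = 2*n"
  shows "tm m (vw (map u [1..<m+1])) (ompow g l)
      (rotate (m + 2*s + 1) ((v0 # v1 @ [v2]) @ q @ c # e # p @ b # d # x))
      * ompow g l (q @ c # e # p @ b # d # x)
    = ompow g h v1 * (ompow g (Suc s) (v2 # q @ [c]) * ompow g s q * omc g c e * u 1 e)
      * (vw (map u [2..<m]) p * ompow g h p)
      * (u m b * omc g b d * (ompow g (Suc n) (d # x @ [v0]) * ompow g n x))"
proof -
  have "[1..<m+1] = 1 # [2..<m+1]"
    using upt_conv_Cons[of 1 "m+1"] assms(1) by (simp add: numeral_2_eq_2)
  moreover have "[2..<m+1] = [2..<m] @ [m]"
    using assms(1) by simp
  ultimately have us: "map u [1..<m+1] = u 1 # map u [2..<m] @ [u m]"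
    by simp
  have u: "vw (map u [1..<m+1]) (e # p @ [b]) = u 1 e * vw (map u [2..<m]) p * u m b"
    unfolding us vw_Cons using assms by (simp add: vw_append mult.assoc del: upt_Suc)
  have rot: "rotate (m + 2*s + 1) ((v0 # v1 @ [v2]) @ q @ c # e # p @ b # d # x)
      = (e # p @ [b]) @ (d # x @ [v0]) @ v1 @ (v2 # q @ [c])"
    using assms by (simp add: rotate_drop_take)
  have split: "take m ((e # p @ [b]) @ (d # x @ [v0]) @ v1 @ (v2 # q @ [c])) = e # p @ [b]"
    "drop m ((e # p @ [b]) @ (d # x @ [v0]) @ v1 @ (v2 # q @ [c])) = (d # x @ [v0]) @ v1 @ (v2 # q @ [c])"
    using assms by simp_all
  have "ompow g l ((d # x @ [v0]) @ v1 @ (v2 # q @ [c]))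
      = ompow g (Suc n) (d # x @ [v0]) * ompow g (l - Suc n) (v1 @ (v2 # q @ [c]))"
    by (rule ompow_append) (use assms in simp_all)
  also have "ompow g (l - Suc n) (v1 @ (v2 # q @ [c])) = ompow g h v1 * ompow g (Suc s) (v2 # q @ [c])"
    using ompow_append[of v1 h "l - Suc n" g "v2 # q @ [c]"] assms by simp
  finally have omega1: "ompow g l ((d # x @ [v0]) @ v1 @ (v2 # q @ [c]))
      = ompow g (Suc n) (d # x @ [v0]) * (ompow g h v1 * ompow g (Suc s) (v2 # q @ [c]))" .
  have omega2: "ompow g l (q @ c # e # p @ b # d # x)
      = ompow g s q * omc g c e * (ompow g h p * omc g b d * ompow g n x)"
    using assms by (simp add: ompow_append_pair)
  show ?thesis
    unfolding rot tm_def split u omega1 omega2 by (simp only: mult_ac)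
qed

lemma contr_rot_odd_mid_Cons_snoc:
  fixes u :: "nat \<Rightarrow> 'k::comm_ring_1 vec"
  assumes mh: "m = 2*h + 2" and ln: "l = s + h + n + 2"
    and v: "length v1 = 2*h" "v0 < 2*g" "v2 < 2*g"
  shows "contr_rot g m l (vw (map u [1..<m+1])) (m + 2*s + 1) (v0 # v1 @ [v2])
    = (-1)^Suc n * (-1)^Suc s * (contl g (map u [2..<m]) * (u m v0 * (ompow g h v1 * u 1 v2)))"
proof -
  have "contr_rot g m l (vw (map u [1..<m+1])) (m + 2*s + 1) (v0 # v1 @ [v2]) =
    (\<Sum>q\<in>words g (2*s). \<Sum>c<2*g. \<Sum>e<2*g. \<Sum>p\<in>words g (2*h). \<Sum>b<2*g. \<Sum>d<2*g. \<Sum>x\<in>words g (2*n).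
      ompow g h v1 * (ompow g (Suc s) (v2 # q @ [c]) * ompow g s q * omc g c e * u 1 e)
      * (vw (map u [2..<m]) p * ompow g h p)
      * (u m b * omc g b d * (ompow g (Suc n) (d # x @ [v0]) * ompow g n x)))"
  proof -
    have l2: "2*l = 2*s + (2 + (2*h + (2 + 2*n)))"
      using ln by simp
    show ?thesis
      unfolding contr_rot_def contrC_eq_sum_ompow l2 sum_words_split_pair
      by (intro sum.cong refl tm_rotate_odd_mid[OF mh ln v(1)]) (simp_all add: length_words)
  qed
  also have "\<dots> = ompow g h v1
      * (\<Sum>q\<in>words g (2*s). \<Sum>c<2*g. \<Sum>e<2*g. ompow g (Suc s) (v2 # q @ [c]) * ompow g s q * omc g c e * u 1 e)
      * (\<Sum>p\<in>words g (2*h). vw (map u [2..<m]) p * ompow g h p)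
      * (\<Sum>b<2*g. \<Sum>d<2*g. \<Sum>x\<in>words g (2*n). u m b * omc g b d * (ompow g (Suc n) (d # x @ [v0]) * ompow g n x))"
    by (simp only: sum_distrib_left[symmetric] sum_distrib_right[symmetric])
  also have "\<dots> = ompow g h v1 * ((-1)^Suc s * u 1 v2) * contl g (map u [2..<m]) * ((-1)^Suc n * u m v0)"
  proof -
    have "(\<Sum>p\<in>words g (2*h). vw (map u [2..<m]) p * ompow g h p) = contl g (map u [2..<m])"
      by (rule sum_vw_ompow) (simp add: mh del: upt_Suc)
    then show ?thesis
      unfolding sum_vec_shift_chain[OF \<open>v0 < 2*g\<close>] sum_shift_chain_vec[OF \<open>v2 < 2*g\<close>] by (simp only:)
  qed
  also have "\<dots> = (-1)^Suc n * (-1)^Suc s * (contl g (map u [2..<m]) * (u m v0 * (ompow g h v1 * u 1 v2)))"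
    by (simp only: mult_ac)
  finally show ?thesis .
qed

lemma contr_rot_odd_mid:
  fixes u :: "nat \<Rightarrow> 'k::comm_ring_1 vec"
  assumes v: "v \<in> words g m" and "even m" "2 \<le> m" and j: "odd j" "m < j" "j \<le> 2*l"
  shows "contr_rot g m l (vw (map u [1..<m+1])) j v = (-1)^l * Phi1 g m u v"
proof -
  obtain m' j' where "m = 2*m'" "j = 2*j' + 1"
    using assms(2) j(1) by (auto elim!: evenE oddE)
  define h s n where "h = m' - 1" and "s = j' - m'" and "n = l - s - h - 2"
  have mh: "m = 2*h + 2" and js: "j = m + 2*s + 1" and ln: "l = s + h + n + 2"
    using assms \<open>m = 2*m'\<close> \<open>j = 2*j' + 1\<close> by (simp_all add: h_def s_def n_def)
  obtain v0 v' where "v = v0 # v'"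
    using length_words[OF v] mh by (cases v) auto
  then have "v' \<noteq> []"
    using length_words[OF v] mh by auto
  define v1 v2 where "v1 = butlast v'" and "v2 = last v'"
  have vv: "v = v0 # v1 @ [v2]" "length v1 = 2*h"
    using \<open>v = v0 # v'\<close> \<open>v' \<noteq> []\<close> length_words[OF v] mh by (simp_all add: v1_def v2_def)
  have "v0 < 2*g" "v2 < 2*g"
    using nth_words_less[OF v, of 0] nth_words_less[OF v, of "m - 1"] vv mh by (simp_all add: nth_append)
  have sign: "(-1::'k)^Suc n * (-1)^Suc s = (-1)^l * (-1)^h"
    unfolding power_add[symmetric] by (rule neg_one_power_eq[of _ _ l]) (simp add: ln)
  have "Phi1 g m u v = (-1)^h * contl g (map u [2..<m]) * (u m v0 * (ompow g h v1 * u 1 v2))"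
  proof -
    have "m div 2 - 1 = h"
      using mh by simp
    then show ?thesis
      unfolding Phi1_def tm_def vv(1) using vv(2) by (simp only:) (simp add: mult.assoc del: upt_Suc)
  qed
  then show ?thesis
    unfolding vv(1) js contr_rot_odd_mid_Cons_snoc[OF mh ln vv(2) \<open>v0 < 2*g\<close> \<open>v2 < 2*g\<close>] sign
    by (simp only: mult_ac)
qed

lemma tm_rotate_odd_greater:
  fixes u :: "nat \<Rightarrow> 'k::comm_ring_1 vec"
  assumes "m = q' + 2*i + 1" "l = s + i + 1"
    and "length v1 = q'" "length v2 = 2*i" "length q = 2*s" "length p = 2*i"
  shows "tm m (vw (map u [1..<m+1])) (ompow g l) (rotate (m + 2*s + 1) ((v1 @ v2 @ [v3]) @ q @ c # e # p))
      * ompow g l (q @ c # e # p)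
    = vw (map u [2*i+2..<m+1]) v1 * ompow g i v2
      * (ompow g (Suc s) (v3 # q @ [c]) * ompow g s q * omc g c e * u 1 e)
      * (vw (map u [2..<2*i+2]) p * ompow g i p)"
proof -
  have "[1..<m+1] = 1 # [2..<m+1]"
    using upt_conv_Cons[of 1 "m+1"] assms(1) by (simp add: numeral_2_eq_2)
  moreover have "[2..<m+1] = [2..<2*i+2] @ [2*i+2..<m+1]"
    using assms(1) upt_add_eq_append[of 2 "2*i+2" q'] by (simp add: add.commute)
  ultimately have us: "map u [1..<m+1] = u 1 # map u [2..<2*i+2] @ map u [2*i+2..<m+1]"
    by simp
  have u: "vw (map u [1..<m+1]) (e # p @ v1) = u 1 e * vw (map u [2..<2*i+2]) p * vw (map u [2*i+2..<m+1]) v1"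
    unfolding us vw_Cons using assms by (simp add: vw_append mult.assoc del: upt_Suc)
  have rot: "rotate (m + 2*s + 1) ((v1 @ v2 @ [v3]) @ q @ c # e # p) = (e # p @ v1) @ v2 @ (v3 # q @ [c])"
    using assms by (simp add: rotate_drop_take)
  have split: "take m ((e # p @ v1) @ v2 @ (v3 # q @ [c])) = e # p @ v1"
    "drop m ((e # p @ v1) @ v2 @ (v3 # q @ [c])) = v2 @ (v3 # q @ [c])"
    using assms by simp_all
  have omega1: "ompow g l (v2 @ (v3 # q @ [c])) = ompow g i v2 * ompow g (Suc s) (v3 # q @ [c])"
    using ompow_append[of v2 i l g "v3 # q @ [c]"] assms by simp
  have omega2: "ompow g l (q @ c # e # p) = ompow g s q * omc g c e * ompow g i p"
    using assms by (simp add: ompow_append_pair)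
  show ?thesis
    unfolding rot tm_def split u omega1 omega2 by (simp only: mult_ac)
qed

lemma contr_rot_odd_greater_snoc:
  fixes u :: "nat \<Rightarrow> 'k::comm_ring_1 vec"
  assumes mq: "m = q' + 2*i + 1" and ls: "l = s + i + 1"
    and v: "length v1 = q'" "length v2 = 2*i" "v3 < 2*g"
  shows "contr_rot g m l (vw (map u [1..<m+1])) (m + 2*s + 1) (v1 @ v2 @ [v3])
    = (-1)^Suc s * (contl g (map u [2..<2*i+2]) * (vw (map u [2*i+2..<m+1]) v1 * (ompow g i v2 * u 1 v3)))"
proof -
  have "contr_rot g m l (vw (map u [1..<m+1])) (m + 2*s + 1) (v1 @ v2 @ [v3]) =
    (\<Sum>q\<in>words g (2*s). \<Sum>c<2*g. \<Sum>e<2*g. \<Sum>p\<in>words g (2*i).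
      vw (map u [2*i+2..<m+1]) v1 * ompow g i v2
      * (ompow g (Suc s) (v3 # q @ [c]) * ompow g s q * omc g c e * u 1 e)
      * (vw (map u [2..<2*i+2]) p * ompow g i p))"
  proof -
    have l2: "2*l = 2*s + (2 + 2*i)"
      using ls by simp
    show ?thesis
      unfolding contr_rot_def contrC_eq_sum_ompow l2 sum_words_split_pair
      by (intro sum.cong refl tm_rotate_odd_greater[OF mq ls v(1,2)]) (simp_all add: length_words)
  qed
  also have "\<dots> = vw (map u [2*i+2..<m+1]) v1 * ompow g i v2
      * (\<Sum>q\<in>words g (2*s). \<Sum>c<2*g. \<Sum>e<2*g. ompow g (Suc s) (v3 # q @ [c]) * ompow g s q * omc g c e * u 1 e)
      * (\<Sum>p\<in>words g (2*i). vw (map u [2..<2*i+2]) p * ompow g i p)"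
    by (simp only: sum_distrib_left[symmetric] sum_distrib_right[symmetric])
  also have "\<dots> = (-1)^Suc s * (contl g (map u [2..<2*i+2]) * (vw (map u [2*i+2..<m+1]) v1 * (ompow g i v2 * u 1 v3)))"
  proof -
    have "(\<Sum>p\<in>words g (2*i). vw (map u [2..<2*i+2]) p * ompow g i p) = contl g (map u [2..<2*i+2])"
      by (rule sum_vw_ompow) (simp del: upt_Suc)
    then show ?thesis
      unfolding sum_shift_chain_vec[OF \<open>v3 < 2*g\<close>] by (simp only: mult_ac)
  qed
  finally show ?thesis .
qed

lemma contr_rot_odd_greater:
  fixes u :: "nat \<Rightarrow> 'k::comm_ring_1 vec"
  assumes v: "v \<in> words g m" and "even m" "m \<le> 2*l" and j: "odd j" "2*l < j" "j < m + 2*l"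
    and i: "m + 2*l - j = 2*i + 1"
  shows "contr_rot g m l (vw (map u [1..<m+1])) j v = (-1)^l * (-1)^i * Phi2_term2 g m u (2*i + 1) v"
proof -
  obtain m' j' where "m = 2*m'" "j = 2*j' + 1"
    using assms(2) j(1) by (auto elim!: evenE oddE)
  define q' s where "q' = m - (2*i + 1)" and "s = j' - m'"
  have mq: "m = q' + 2*i + 1" and ls: "l = s + i + 1" and js: "j = m + 2*s + 1"
    using assms \<open>m = 2*m'\<close> \<open>j = 2*j' + 1\<close> by (simp_all add: q'_def s_def)
  define v1 v' where "v1 = take q' v" and "v' = drop q' v"
  then have "v' \<noteq> []"
    using length_words[OF v] mq by auto
  define v2 v3 where "v2 = butlast v'" and "v3 = last v'"
  have "v = v1 @ v'"
    by (simp add: v1_def v'_def)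
  moreover have "v' = v2 @ [v3]"
    unfolding v2_def v3_def using \<open>v' \<noteq> []\<close> by (rule append_butlast_last_id[symmetric])
  ultimately have "v = v1 @ v2 @ [v3]"
    by simp
  moreover have "length v1 = q'"
    using length_words[OF v] mq by (simp add: v1_def)
  ultimately have vv: "v = v1 @ v2 @ [v3]" "length v1 = q'" "length v2 = 2*i"
    using length_words[OF v] mq arg_cong[of v "v1 @ v2 @ [v3]" length] by simp_all
  have "v3 < 2*g"
    using nth_words_less[OF v, of "m - 1"] vv mq by (simp add: nth_append)
  have sign: "(-1::'k)^Suc s = (-1)^l * (-1)^i"
    unfolding power_add[symmetric] by (rule neg_one_power_eq[of _ _ l]) (simp add: ls)
  have "Phi2_term2 g m u (2*i + 1) v
      = contl g (map u [2..<2*i+2]) * (vw (map u [2*i+2..<m+1]) v1 * (ompow g i v2 * u 1 v3))"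
  proof -
    have "m - (2*i + 1) = q'" "2*i + 1 + 1 = 2*i + 2"
      using mq by simp_all
    then show ?thesis
      unfolding Phi2_term2_def tm_def vv(1) using vv(2,3) by (simp only:) (simp del: upt_Suc)
  qed
  then show ?thesis
    unfolding vv(1) js contr_rot_odd_greater_snoc[OF mq ls vv(2,3) \<open>v3 < 2*g\<close>] sign
    by (simp only: mult_ac)
qed

definition contr_rot_reduced :: "nat \<Rightarrow> nat \<Rightarrow> nat \<Rightarrow> (nat \<Rightarrow> 'k::comm_ring_1 vec) \<Rightarrow> nat \<Rightarrow> 'k tensor" where
  "contr_rot_reduced g m l u j v =
     (if j = 0 then of_nat (2*g) ^ l * vw (map u [1..<m+1]) v else 0)
   + (if odd j \<and> j < m then (-1)^l * (-1)^((j - 1) div 2) * Phi2_term1 g m u j v else 0)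
   + (if odd j \<and> m < j \<and> j \<le> 2*l then (-1)^l * Phi1 g m u v else 0)
   + (if odd j \<and> 2*l < j then (-1)^l * (-1)^((m + 2*l - j - 1) div 2) * Phi2_term2 g m u (m + 2*l - j) v else 0)"

lemma card_odd_between:
  assumes "even m" "m \<le> 2*l"
  shows "card {j \<in> {..<m + 2*l}. odd j \<and> m < j \<and> j \<le> 2*l} = l - m div 2"
proof -
  have "{j \<in> {..<m + 2*l}. odd j \<and> m < j \<and> j \<le> 2*l} = (\<lambda>i. m + 1 + 2*i) ` {..<l - m div 2}"
  proof (rule set_eqI, rule iffI)
    fix j assume j: "j \<in> {j \<in> {..<m + 2*l}. odd j \<and> m < j \<and> j \<le> 2*l}"
    then obtain i where "j = 2*i + 1" by (auto elim: oddE)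
    then show "j \<in> (\<lambda>i. m + 1 + 2*i) ` {..<l - m div 2}"
      using j assms by (auto intro!: image_eqI[where x="i - m div 2"] elim!: evenE)
  qed (use assms in auto)
  moreover have "card ((\<lambda>i. m + 1 + 2*i) ` {..<l - m div 2}) = l - m div 2"
    by (subst card_image) (auto simp: inj_on_def)
  ultimately show ?thesis
    by simp
qed

lemma sum_contr_rot_reduced:
  assumes "even m" "2 \<le> m" "m \<le> 2*l"
  shows "(\<Sum>j<m+2*l. contr_rot_reduced g m l u j v) = of_nat (2*g) ^ l * vw (map u [1..<m+1]) v
    + of_nat (l - m div 2) * (-1) ^ l * Phi1 g m u v + (-1) ^ l * Phi2 g m u v"
proof -
  let ?N = "m + 2*l" and ?K = "{k. 1 \<le> k \<and> k \<le> m - 1 \<and> odd k}"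
  have first: "(\<Sum>j<?N. if odd j \<and> j < m then (-1)^l * (-1)^((j - 1) div 2) * Phi2_term1 g m u j v else 0)
      = (-1)^l * (\<Sum>k\<in>?K. (-1)^((k - 1) div 2) * Phi2_term1 g m u k v)"
  proof -
    have "{j \<in> {..<?N}. odd j \<and> j < m} = ?K"
      using assms by (auto dest: odd_pos)
    then show ?thesis
      unfolding sum.inter_filter[OF finite_lessThan, symmetric] by (simp add: sum_distrib_left mult.assoc)
  qed
  have middle: "(\<Sum>j<?N. if odd j \<and> m < j \<and> j \<le> 2*l then (-1)^l * Phi1 g m u v else 0)
      = of_nat (l - m div 2) * (-1)^l * Phi1 g m u v"
    unfolding sum.inter_filter[OF finite_lessThan, symmetric] sum_constant card_odd_between[OF assms(1,3)]
    by simp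
  have last: "(\<Sum>j<?N. if odd j \<and> 2*l < j then (-1)^l * (-1)^((?N - j - 1) div 2) * Phi2_term2 g m u (?N - j) v else 0)
      = (-1)^l * (\<Sum>k\<in>?K. (-1)^((k - 1) div 2) * Phi2_term2 g m u k v)"
  proof -
    have "(\<Sum>j\<in>{j \<in> {..<?N}. odd j \<and> 2*l < j}. (-1)^((?N - j - 1) div 2) * Phi2_term2 g m u (?N - j) v)
        = (\<Sum>k\<in>?K. (-1)^((k - 1) div 2) * Phi2_term2 g m u k v)"
      by (rule sum.reindex_bij_witness[where i="\<lambda>k. ?N - k" and j="\<lambda>j. ?N - j"])
        (use assms in \<open>auto elim!: evenE\<close>)
    then show ?thesis
      unfolding sum.inter_filter[OF finite_lessThan, symmetric] mult.assoc sum_distrib_left[symmetric]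
      by (simp only:)
  qed
  have "Phi2 g m u v = (\<Sum>k\<in>?K. (-1)^((k - 1) div 2) * Phi2_term1 g m u k v)
      + (\<Sum>k\<in>?K. (-1)^((k - 1) div 2) * Phi2_term2 g m u k v)"
    unfolding Phi2_def Phi2_term1_def Phi2_term2_def by (simp add: distrib_left sum.distrib)
  moreover have "(\<Sum>j<?N. if j = 0 then of_nat (2*g) ^ l * vw (map u [1..<m+1]) v else 0)
      = of_nat (2*g) ^ l * vw (map u [1..<m+1]) v"
    using assms by simp
  ultimately show ?thesis
    unfolding contr_rot_reduced_def sum.distrib first middle last by (simp add: algebra_simps)
qed

lemma contr_rot_eq_reduced:
  fixes u :: "nat \<Rightarrow> 'k::comm_ring_1 vec"
  assumes v: "v \<in> words g m" and "even m" "2 \<le> m" "m \<le> 2*l" "j < m + 2*l" "j = 0 \<or> odd j"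
  shows "contr_rot g m l (vw (map u [1..<m+1])) j v = contr_rot_reduced g m l u j v"
proof -
  have "j \<noteq> m" if "odd j"
    using that \<open>even m\<close> by auto
  then consider "j = 0" | "odd j" "j < m" | "odd j" "m < j" "j \<le> 2*l" | "odd j" "2*l < j"
    using assms by (cases "j < m"; cases "j \<le> 2*l") auto
  then show ?thesis
  proof cases
    case 1
    then show ?thesis
      using length_words[OF v] by (simp add: contr_rot_0 contr_rot_reduced_def)
  next
    case 2
    then obtain i where i: "j = 2*i + 1"
      by (auto elim: oddE)
    then show ?thesis
      using contr_rot_odd_less[where u=u, OF v i \<open>j < m\<close> \<open>m \<le> 2*l\<close>] 2 assms(4)
      by (simp add: contr_rot_reduced_def)
  next
    case 3
    then show ?thesis
      using contr_rot_odd_mid[where u=u, OF v \<open>even m\<close> \<open>2 \<le> m\<close> 3] by (simp add: contr_rot_reduced_def)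
  next
    case 4
    obtain m' j' where "m = 2*m'" "j = 2*j' + 1"
      using assms(2) 4 by (auto elim!: evenE oddE)
    define i where "i = m' + l - j' - 1"
    have i: "m + 2*l - j = 2*i + 1"
      using \<open>m = 2*m'\<close> \<open>j = 2*j' + 1\<close> \<open>j < m + 2*l\<close> by (simp add: i_def)
    then have "(m + 2*l - j - 1) div 2 = i"
      by simp
    then show ?thesis
      using contr_rot_odd_greater[where u=u, OF v \<open>even m\<close> \<open>m \<le> 2*l\<close> 4 \<open>j < m + 2*l\<close> i] 4 i assms(4)
      by (simp add: contr_rot_reduced_def)
  qed
qed

lemma Pi2_contr_rot_eq_reduced:
  fixes u :: "nat \<Rightarrow> 'k::field_char_0 vec"
  assumes "0 < g" "w \<in> words g m" "even m" "4 \<le> m" "m \<le> 2*l" "j < m + 2*l"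
  shows "Pi2 g (contr_rot g m l (vw (map u [1..<m+1])) j) w = Pi2 g (contr_rot_reduced g m l u j) w"
proof (cases "j = 0 \<or> odd j")
  case True
  then show ?thesis
    using assms by (intro Pi2_cong_words[OF _ assms(2)] contr_rot_eq_reduced) auto
next
  case False
  then have "contr_rot_reduced g m l u j = (\<lambda>v. 0)"
    by (simp add: fun_eq_iff contr_rot_reduced_def)
  moreover have "Pi2 g (contr_rot g m l (vw (map u [1..<m+1])) j) w = 0"
  proof (cases "j \<le> 2*l")
    case True
    then show ?thesis
      using False assms length_words[OF assms(2)] by (intro Pi2_contr_rot_even_left) auto
  next
    case False
    then show ?thesis
      using \<open>\<not> (j = 0 \<or> odd j)\<close> assms length_words[OF assms(2)] by (intro Pi2_contr_rot_even_right) auto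
  qed
  ultimately show ?thesis
    by (simp add: Pi2_zero)
qed

theorem lemma5p4:
  fixes g m l :: nat and u :: "nat \<Rightarrow> 'k::field_char_0 vec"
  assumes "0 < g" and "even m" and "4 \<le> m" and "m div 2 \<le> l"
  shows "\<forall>w\<in>words g m.
    Pi2 g (contrC g l (cyc (m + 2*l) (tm m (vw (map u [1..<m+1])) (ompow g l)))) w =
    Pi2 g (\<lambda>v. of_nat (2*g) ^ l * vw (map u [1..<m+1]) v
               + of_nat (l - m div 2) * (-1) ^ l * Phi1 g m u v
               + (-1) ^ l * Phi2 g m u v) w"
proof
  fix w assume w: "w \<in> words g m"
  let ?U = "vw (map u [1..<m+1])" and ?N = "m + 2*l"
  have m: "2 \<le> m" "m \<le> 2*l"
    using assms by (auto elim!: evenE)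
  have "Pi2 g (contrC g l (cyc ?N (tm m ?U (ompow g l)))) w
      = Pi2 g (\<lambda>v. \<Sum>j<?N. contr_rot g m l ?U j v) w"
    using m by (intro Pi2_cong_words[OF _ w]) (simp_all add: contrC_cyc length_words contr_rot_def)
  also have "\<dots> = (\<Sum>j<?N. Pi2 g (contr_rot g m l ?U j) w)"
    by (simp add: Pi2_sum)
  also have "\<dots> = (\<Sum>j<?N. Pi2 g (contr_rot_reduced g m l u j) w)"
    using assms w m by (intro sum.cong refl Pi2_contr_rot_eq_reduced) auto
  also have "\<dots> = Pi2 g (\<lambda>v. \<Sum>j<?N. contr_rot_reduced g m l u j v) w"
    by (simp add: Pi2_sum)
  also have "(\<lambda>v. \<Sum>j<?N. contr_rot_reduced g m l u j v) = (\<lambda>v. of_nat (2*g) ^ l * ?U v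
      + of_nat (l - m div 2) * (-1) ^ l * Phi1 g m u v + (-1) ^ l * Phi2 g m u v)"
    by (rule ext, rule sum_contr_rot_reduced[OF assms(2) m])
  finally show "Pi2 g (contrC g l (cyc ?N (tm m ?U (ompow g l)))) w =
    Pi2 g (\<lambda>v. of_nat (2*g) ^ l * ?U v + of_nat (l - m div 2) * (-1) ^ l * Phi1 g m u v
               + (-1) ^ l * Phi2 g m u v) w" .
qed

end
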